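(* Under the assumptions of Theorem 2, for every integer $j\ge J_2^\star$, $$\mathbb P(\tau_{\text{com}}>j)\le 3(n+m)^3\exp\big(-j/(3\bar d)\big).$$
   Context: Setting: undirected graph on honest agents $[n]$ and malicious agents $n+1,\dots,n+m$; $N(i)$ neighbors of $i$, $\bar d=\max_{i\in[n]}|N(i)|$; $E_{\text{hon}}$ the edges among honest agents. In the algorithm, at the end of each phase $j$, honest $i$ samples $H_j^{(i)}$ uniformly from $N(i)\setminus P_j^{(i)}$ (independently of everything else given the past), where $P_j^{(i)}$ is its blocklist at phase $j$; the proposed blocking rule, whenever it triggers at phase $j$, adds the agent $H_{j-1}^{(i)}$ to $P_{j'}^{(i)}$ exactly for $j'\in\{j,\dots,\lceil j^\eta\rceil\}$ (blocklists otherwise empty); the rule involves $\theta_j=(j/3)^{\rho_1}$. Assumptions of Theorem 2 include $\eta>1$, $0<\rho_1\le1/\eta$ (and the other conditions $\beta>1$, $\alpha>\frac32+\frac1{2\beta}+\frac1{2\rho_1^2}$, $\frac1{2\alpha-3}<\rho_2<\rho_1(\beta-1)$, $G_{\text{hon}}$ connected). Definitions. $J_2^\star=\min\{j\in\mathbb N: 1\le\lfloor\theta_{j'}\rfloor\le j'-2\text{ and } j'/3\le(j'-2)-\lceil\lfloor\theta_{j'}\rfloor^\eta\rceil\ \forall j'\ge j\}$. For $\{i,i'\}\in E_{\text{hon}}$, $\Xi_j^{(i\to i')}=\bigcap_{j'=\lfloor\theta_j\rfloor}^{j-2}\{H_{j'}^{(i')}\ne i\}$. $\tau_{\text{com}}=\inf\{j\in\mathbb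 N:$ for all $j'\ge j$ and all ordered pairs $(i,i')$ with $\{i,i'\}\in E_{\text{hon}}$, $\Xi_{j'}^{(i\to i')}$ does not occur$\}$. *)

theory Defs
  imports "HOL-Probability.Probability"
begin

text \<open>Agents are natural numbers: honest agents are 1..n, malicious ones n+1..n+m.
  The graph is given by the neighbour map N.  Phases are j = 1, 2, ...\<close>

definition honest :: "nat \<Rightarrow> nat set" where
  "honest n = {1..n}"

definition dbar :: "nat \<Rightarrow> (nat \<Rightarrow> nat set) \<Rightarrow> nat" where
  "dbar n N = Max ((\<lambda>i. card (N i)) ` {1..n})"

definition Ehon :: "nat \<Rightarrow> (nat \<Rightarrow> nat set) \<Rightarrow> (nat \<times> nat) set" where
  "Ehon n N = {(i, i'). i \<in> {1..n} \<and> i' \<in> {1..n} \<and> i' \<in> N i}"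

definition valid_graph :: "nat \<Rightarrow> nat \<Rightarrow> (nat \<Rightarrow> nat set) \<Rightarrow> bool" where
  "valid_graph n m N \<longleftrightarrow>
     (\<forall>i\<in>{1..n+m}. N i \<subseteq> {1..n+m} \<and> i \<notin> N i) \<and>
     (\<forall>i\<in>{1..n+m}. \<forall>k\<in>{1..n+m}. k \<in> N i \<longleftrightarrow> i \<in> N k)"

definition hon_connected :: "nat \<Rightarrow> (nat \<Rightarrow> nat set) \<Rightarrow> bool" where
  "hon_connected n N \<longleftrightarrow> (\<forall>i\<in>{1..n}. \<forall>i'\<in>{1..n}. (i, i') \<in> (Ehon n N)\<^sup>*)"

definition theta :: "real \<Rightarrow> nat \<Rightarrow> real" where
  "theta \<rho>1 j = (real j / 3) powr \<rho>1"

definition J2star :: "real \<Rightarrow> real \<Rightarrow> nat" where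
  "J2star \<rho>1 \<eta> = (LEAST j::nat. j \<ge> 1 \<and> (\<forall>j'\<ge>j.
       1 \<le> \<lfloor>theta \<rho>1 j'\<rfloor> \<and> \<lfloor>theta \<rho>1 j'\<rfloor> \<le> int j' - 2 \<and>
       real j' / 3 \<le> real_of_int ((int j' - 2) - \<lceil>(real_of_int \<lfloor>theta \<rho>1 j'\<rfloor>) powr \<eta>\<rceil>)))"

text \<open>Blocklist P_j^(i): the trigger trig j0 i (blocking rule fires for agent i at phase j0)
  adds H_(j0-1)^(i) to the blocklists of phases j0, ..., ceil(j0^eta).\<close>
definition blocklist ::
  "real \<Rightarrow> (nat \<Rightarrow> nat \<Rightarrow> 'a \<Rightarrow> bool) \<Rightarrow> (nat \<Rightarrow> nat \<Rightarrow> 'a \<Rightarrow> nat) \<Rightarrow> nat \<Rightarrow> nat \<Rightarrow> 'a \<Rightarrow> nat set" where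
  "blocklist \<eta> trig H j i \<omega> =
     {H (j0 - 1) i \<omega> | j0. 2 \<le> j0 \<and> j0 \<le> j \<and> real j \<le> real_of_int \<lceil>real j0 powr \<eta>\<rceil> \<and> trig j0 i \<omega>}"

definition Xi :: "real \<Rightarrow> (nat \<Rightarrow> nat \<Rightarrow> 'a \<Rightarrow> nat) \<Rightarrow> nat \<Rightarrow> nat \<Rightarrow> nat \<Rightarrow> 'a \<Rightarrow> bool" where
  "Xi \<rho>1 H j i i' \<omega> \<longleftrightarrow> (\<forall>j'\<in>{nat \<lfloor>theta \<rho>1 j\<rfloor> .. j - 2}. H j' i' \<omega> \<noteq> i)"

text \<open>tau_com, valued in enat (infinity if the defining set is empty).\<close>
definition tau_com :: "nat \<Rightarrow> (nat \<Rightarrow> nat set) \<Rightarrow> real \<Rightarrow> (nat \<Rightarrow> nat \<Rightarrow> 'a \<Rightarrow> nat) \<Rightarrow> 'a \<Rightarrow> enat" where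
  "tau_com n N \<rho>1 H \<omega> = (INF j \<in> {j::nat. j \<ge> 1 \<and>
       (\<forall>j'\<ge>j. \<forall>(i, i') \<in> Ehon n N. \<not> Xi \<rho>1 H j' i i' \<omega>)}. enat j)"

end

theory Submission imports Defs begin

text \<open>Fix an honest edge \<open>(i, i')\<close> and a phase \<open>j \<ge> J2star\<close>, and let \<open>a = \<lfloor>\<theta>\<^sub>j\<rfloor>\<close>.
  Every entry that could block \<open>i\<close> in the blocklist of \<open>i'\<close> expires by phase \<open>\<lceil>a\<^sup>\<eta>\<rceil>\<close>,
  unless it was created by a contact \<open>i' \<rightarrow> i\<close> at a phase \<open>\<ge> a\<close>.  Hence, as long as \<open>i'\<close>
  has not contacted \<open>i\<close> since phase \<open>a\<close>, every phase after \<open>\<lceil>a\<^sup>\<eta>\<rceil>\<close> contacts \<open>i\<close> with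
  conditional probability at least \<open>1/d\<close>, \<open>d = dbar\<close>.  By the choice of \<open>J2star\<close> at least \<open>j/3\<close> such
  phases lie in the window of \<open>\<Xi>\<^sub>j\<close>, so \<open>P(\<Xi>\<^sub>j) \<le> (1 - 1/d)\<^bsup>j/3\<^esup> \<le> exp (-j/(3d))\<close>.  A union
  bound over at most \<open>n\<^sup>2\<close> edges and all phases \<open>j' \<ge> j\<close> gives a geometric series whose
  factor \<open>1/(1 - exp (-1/(3d)))\<close> is at most \<open>1 + 3d \<le> 3(n + m)\<close>.\<close>

lemma J2star_conditions_ge_9:
  assumes "\<eta> > 1" "0 < \<rho>1" "\<rho>1 \<le> 1 / \<eta>" "9 \<le> j"
  shows "1 \<le> \<lfloor>theta \<rho>1 j\<rfloor> \<and> \<lfloor>theta \<rho>1 j\<rfloor> \<le> int j - 2 \<and>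
       real j / 3 \<le> real_of_int ((int j - 2) - \<lceil>(real_of_int \<lfloor>theta \<rho>1 j\<rfloor>) powr \<eta>\<rceil>)"
proof -
  define x where "x = real j / 3"
  have x3: "x \<ge> 3" using assms(4) unfolding x_def by simp
  have "\<rho>1 \<le> 1" using assms(1,3) by (smt (verit) divide_le_eq_1_pos)
  then have theta_le: "theta \<rho>1 j \<le> x"
    unfolding theta_def x_def[symmetric] using powr_mono[of \<rho>1 1 x] x3 by simp
  have floor_ge_1: "1 \<le> \<lfloor>theta \<rho>1 j\<rfloor>"
    unfolding theta_def x_def[symmetric] le_floor_iff
    using ge_one_powr_ge_zero[of x \<rho>1] x3 assms(2) by simp
  define f where "f = real_of_int \<lfloor>theta \<rho>1 j\<rfloor>"
  have "f powr \<eta> \<le> theta \<rho>1 j powr \<eta>"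
    using floor_ge_1 assms(1) by (intro powr_mono2) (auto simp: f_def)
  also have "\<dots> = x powr (\<rho>1 * \<eta>)"
    unfolding theta_def x_def[symmetric] using x3 by (simp add: powr_powr)
  also have "\<dots> \<le> x powr 1"
    using assms(1,3) x3 by (intro powr_mono) (auto simp: field_simps)
  finally have "f powr \<eta> \<le> x" using x3 by simp
  then show ?thesis
    using floor_ge_1 theta_le x3 unfolding f_def x_def by linarith
qed

lemma J2star_conditions:
  assumes "\<eta> > 1" "0 < \<rho>1" "\<rho>1 \<le> 1 / \<eta>" "J2star \<rho>1 \<eta> \<le> j"
  shows "1 \<le> j" and "1 \<le> \<lfloor>theta \<rho>1 j\<rfloor>"
    and "real j / 3 \<le> real_of_int ((int j - 2) - \<lceil>(real_of_int \<lfloor>theta \<rho>1 j\<rfloor>) powr \<eta>\<rceil>)"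
proof -
  let ?P = "\<lambda>j::nat. j \<ge> 1 \<and> (\<forall>j'\<ge>j.
       1 \<le> \<lfloor>theta \<rho>1 j'\<rfloor> \<and> \<lfloor>theta \<rho>1 j'\<rfloor> \<le> int j' - 2 \<and>
       real j' / 3 \<le> real_of_int ((int j' - 2) - \<lceil>(real_of_int \<lfloor>theta \<rho>1 j'\<rfloor>) powr \<eta>\<rceil>))"
  have "?P 9" using J2star_conditions_ge_9[OF assms(1-3)] by auto
  then have "?P (J2star \<rho>1 \<eta>)" unfolding J2star_def by (rule LeastI)
  then show "1 \<le> j" "1 \<le> \<lfloor>theta \<rho>1 j\<rfloor>"
    "real j / 3 \<le> real_of_int ((int j - 2) - \<lceil>(real_of_int \<lfloor>theta \<rho>1 j\<rfloor>) powr \<eta>\<rceil>)"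
    using assms(4) by auto
qed

lemma inverse_one_minus_exp_le:
  assumes "x > 0"
  shows "1 / (1 - exp (- x)) \<le> 1 + 1 / (x::real)"
proof -
  have "x \<le> exp x - 1" using exp_ge_add_one_self[of x] by linarith
  moreover have "1 / (1 - exp (- x)) = 1 + 1 / (exp x - 1)"
    using assms exp_gt_one[of x] by (simp add: exp_minus field_simps)
  ultimately show ?thesis using assms by (simp add: frac_le)
qed

lemma geometric_union_factor_le:
  fixes C d s :: real
  assumes "1 \<le> d" "d \<le> s - 1" "0 \<le> C" "C \<le> s\<^sup>2"
  shows "C / (1 - exp (- 1 / (3 * d))) \<le> 3 * s ^ 3"
proof -
  have "1 / (1 - exp (- 1 / (3 * d))) \<le> 1 + 3 * d"
    using inverse_one_minus_exp_le[of "1 / (3 * d)"] assms(1) by simp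
  also have "\<dots> \<le> 3 * s - 2" using assms(2) by simp
  finally have "C * (1 / (1 - exp (- 1 / (3 * d)))) \<le> s\<^sup>2 * (3 * s - 2)"
    using assms by (intro mult_mono) auto
  also have "\<dots> \<le> 3 * s ^ 3"
    using assms(1,2) by (simp add: power2_eq_square power3_eq_cube field_simps)
  finally show ?thesis by simp
qed

locale blocking_gossip =
  fixes M :: "'a measure" and F :: "nat \<Rightarrow> 'a measure"
    and n m :: nat and N :: "nat \<Rightarrow> nat set"
    and H :: "nat \<Rightarrow> nat \<Rightarrow> 'a \<Rightarrow> nat" and trig :: "nat \<Rightarrow> nat \<Rightarrow> 'a \<Rightarrow> bool"
    and \<eta> :: real
  assumes prob_space: "prob_space M"
    and n_ge_1: "n \<ge> 1"
    and valid_graph: "valid_graph n m N"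
    and eta_gt_1: "\<eta> > 1"
    and subalgebra_F: "\<And>j. subalgebra M (F j)"
    and sets_F_Suc: "\<And>j. sets (F j) \<subseteq> sets (F (Suc j))"
    and H_measurable: "\<And>j i. H j i \<in> measurable (F (Suc j)) (count_space UNIV)"
    and trig_sets: "\<And>j i. {\<omega> \<in> space M. trig j i \<omega>} \<in> sets (F j)"
    and H_uniform: "\<And>j i k A. j \<ge> 1 \<Longrightarrow> i \<in> {1..n} \<Longrightarrow> A \<in> sets (F j) \<Longrightarrow>
           measure M (A \<inter> {\<omega> \<in> space M. N i - blocklist \<eta> trig H j i \<omega> \<noteq> {} \<and> H j i \<omega> = k})
           = (\<integral>\<omega>. indicator A \<omega> *
                 (if k \<in> N i - blocklist \<eta> trig H j i \<omega>
                  then 1 / real (card (N i - blocklist \<eta> trig H j i \<omega>)) else 0) \<partial>M)"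
begin

interpretation P: prob_space M by (rule prob_space)

lemma space_F: "space (F j) = space M"
  using subalgebra_F[of j] unfolding subalgebra_def by auto

lemma sets_F_subset: "sets (F j) \<subseteq> sets M"
  using subalgebra_F[of j] unfolding subalgebra_def by auto

lemma sets_F_mono: "j \<le> t \<Longrightarrow> sets (F j) \<subseteq> sets (F t)"
  using lift_Suc_mono_le[of "\<lambda>j. sets (F j)", OF sets_F_Suc] by blast

lemma H_event_sets_F:
  assumes "j < t"
  shows "{\<omega> \<in> space M. H j i \<omega> = k} \<in> sets (F t)"
proof -
  have "subalgebra (F t) (F (Suc j))"
    using assms sets_F_mono[of "Suc j" t] unfolding subalgebra_def space_F by simp
  then have "H j i \<in> measurable (F t) (count_space UNIV)"
    by (rule measurable_from_subalg[OF _ H_measurable])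
  then have "H j i -` {k} \<inter> space (F t) \<in> sets (F t)" by (rule measurable_sets) simp
  moreover have "H j i -` {k} \<inter> space (F t) = {\<omega> \<in> space M. H j i \<omega> = k}"
    unfolding space_F by blast
  ultimately show ?thesis by simp
qed

lemma H_event_sets: "{\<omega> \<in> space M. H j i \<omega> = k} \<in> sets M"
  using H_event_sets_F[of j "Suc j"] sets_F_subset by blast

lemma finite_neighbours: "i \<in> {1..n+m} \<Longrightarrow> finite (N i)"
  using valid_graph unfolding valid_graph_def by (meson finite_atLeastAtMost finite_subset)

lemma mem_blocklist_iff:
  "x \<in> blocklist \<eta> trig H t i \<omega> \<longleftrightarrow>
   (\<exists>j0\<in>{j0. 2 \<le> j0 \<and> j0 \<le> t \<and> real t \<le> real_of_int \<lceil>real j0 powr \<eta>\<rceil>}.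
      trig j0 i \<omega> \<and> H (j0 - 1) i \<omega> = x)"
  unfolding blocklist_def by auto

lemma blocklist_event_sets: "{\<omega> \<in> space M. x \<in> blocklist \<eta> trig H t i \<omega>} \<in> sets M"
  unfolding mem_blocklist_iff
proof (rule sets.sets_Collect_finite_Ex)
  show "finite {j0. 2 \<le> j0 \<and> j0 \<le> t \<and> real t \<le> real_of_int \<lceil>real j0 powr \<eta>\<rceil>}"
    by (rule finite_subset[of _ "{..t}"]) auto
  fix j0
  have "{\<omega> \<in> space M. trig j0 i \<omega> \<and> H (j0 - 1) i \<omega> = x}
      = {\<omega> \<in> space M. trig j0 i \<omega>} \<inter> {\<omega> \<in> space M. H (j0 - 1) i \<omega> = x}"
    by blast
  also have "\<dots> \<in> sets M"
    using trig_sets sets_F_subset H_event_sets by blast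
  finally show "{\<omega> \<in> space M. trig j0 i \<omega> \<and> H (j0 - 1) i \<omega> = x} \<in> sets M" .
qed

text \<open>The weight depends on \<open>\<omega>\<close> only through the finite set \<open>blocklist \<inter> N i\<close>.\<close>

lemma uniform_weight_measurable:
  assumes "i \<in> {1..n+m}"
  shows "(\<lambda>\<omega>. if k \<in> N i - blocklist \<eta> trig H t i \<omega>
                then 1 / real (card (N i - blocklist \<eta> trig H t i \<omega>)) else 0) \<in> borel_measurable M"
proof -
  define B where "B \<omega> = blocklist \<eta> trig H t i \<omega> \<inter> N i" for \<omega>
  have fin: "finite (N i)" using finite_neighbours assms by blast
  have "B \<in> M \<rightarrow>\<^sub>M count_space (Pow (N i))"
    unfolding measurable_count_space_eq_countable[OF countable_finite[OF finite_Pow_iff[THEN iffD2, OF fin]]]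
  proof (intro conjI ballI)
    show "B \<in> space M \<rightarrow> Pow (N i)" unfolding B_def by auto
    fix S assume "S \<in> Pow (N i)"
    then have "B -` {S} \<inter> space M =
        {\<omega> \<in> space M. \<forall>x\<in>N i. x \<in> blocklist \<eta> trig H t i \<omega> \<longleftrightarrow> x \<in> S}"
      unfolding B_def by auto
    also have "\<dots> \<in> sets M"
    proof (rule sets.sets_Collect_finite_All[OF _ fin])
      fix x
      show "{\<omega> \<in> space M. x \<in> blocklist \<eta> trig H t i \<omega> \<longleftrightarrow> x \<in> S} \<in> sets M"
        using blocklist_event_sets[of x t i] sets.compl_sets
        by (cases "x \<in> S") (auto simp: set_diff_eq)
    qed
    finally show "B -` {S} \<inter> space M \<in> sets M" .
  qed
  then have "(\<lambda>\<omega>. (\<lambda>S. if k \<in> N i - S then 1 / real (card (N i - S)) else 0) (B \<omega>))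
      \<in> borel_measurable M"
    by (rule measurable_compose) simp
  moreover have "N i - B \<omega> = N i - blocklist \<eta> trig H t i \<omega>" for \<omega>
    unfolding B_def by blast
  ultimately show ?thesis by (simp only:)
qed

lemma Ehon_memD:
  assumes "(i, i') \<in> Ehon n N"
  shows "i \<in> {1..n}" "i' \<in> {1..n}" "i \<in> N i'" "finite (N i')"
proof -
  have hon: "i \<in> {1..n}" "i' \<in> {1..n}" and "i' \<in> N i"
    using assms unfolding Ehon_def by auto
  then show "i \<in> N i'" using valid_graph unfolding valid_graph_def by auto
  from hon show "i \<in> {1..n}" "i' \<in> {1..n}" "finite (N i')"
    using finite_neighbours by simp_all
qed

lemma finite_Ehon: "finite (Ehon n N)"
  by (rule finite_subset[of _ "{1..n} \<times> {1..n}"]) (auto simp: Ehon_def)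

lemma card_Ehon_le: "card (Ehon n N) \<le> (n + m)\<^sup>2"
proof -
  have "card (Ehon n N) \<le> card ({1..n} \<times> {1..n})"
    by (rule card_mono) (auto simp: Ehon_def)
  also have "\<dots> \<le> (n + m) * (n + m)" by (simp add: mult_le_mono)
  finally show ?thesis by (simp add: power2_eq_square)
qed

lemma card_neighbours_le_dbar: "i \<in> {1..n} \<Longrightarrow> card (N i) \<le> dbar n N"
  unfolding dbar_def by (rule Max_ge) auto

lemma dbar_ge_1: "(i, i') \<in> Ehon n N \<Longrightarrow> 1 \<le> dbar n N"
  using Ehon_memD[of i i'] card_neighbours_le_dbar[of i']
  by (metis One_nat_def Suc_leI card_gt_0_iff empty_iff le_trans)

lemma dbar_le: "dbar n N \<le> n + m - 1"
  unfolding dbar_def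
proof (rule Max.boundedI)
  show "(\<lambda>i. card (N i)) ` {1..n} \<noteq> {}" using n_ge_1 by auto
  fix x assume "x \<in> (\<lambda>i. card (N i)) ` {1..n}"
  then obtain i where i: "i \<in> {1..n}" "x = card (N i)" by auto
  then have "N i \<subseteq> {1..n+m} - {i}" using valid_graph unfolding valid_graph_def by auto
  then have "card (N i) \<le> card ({1..n+m} - {i})" by (intro card_mono) auto
  then show "x \<le> n + m - 1" using i by simp
qed simp

lemma contact_prob_ge:
  assumes "t \<ge> 1" "i' \<in> {1..n}" "i \<in> N i'" "A \<in> sets (F t)"
    and unblocked: "\<And>\<omega>. \<omega> \<in> A \<Longrightarrow> i \<notin> blocklist \<eta> trig H t i' \<omega>"
  shows "measure M A / real (dbar n N) \<le> measure M (A \<inter> {\<omega> \<in> space M. H t i' \<omega> = i})"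
proof -
  define d where "d = real (dbar n N)"
  define g where "g \<omega> = (if i \<in> N i' - blocklist \<eta> trig H t i' \<omega>
                  then 1 / real (card (N i' - blocklist \<eta> trig H t i' \<omega>)) else 0)" for \<omega>
  have AM: "A \<in> sets M" using assms(4) sets_F_subset by blast
  have fin: "finite (N i')" using assms(2) finite_neighbours by simp
  have g_bounds: "0 \<le> g \<omega> \<and> g \<omega> \<le> 1" for \<omega>
    using fin card_gt_0_iff[of "N i' - blocklist \<eta> trig H t i' \<omega>"] unfolding g_def by auto
  have g_ge: "1 / d \<le> g \<omega>" if "\<omega> \<in> A" for \<omega>
  proof -
    let ?R = "N i' - blocklist \<eta> trig H t i' \<omega>"
    have iR: "i \<in> ?R" using unblocked[OF that] assms(3) by simp
    then have "0 < card ?R" using fin card_gt_0_iff by blast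
    moreover have "card ?R \<le> dbar n N"
      using card_mono[OF fin, of ?R] card_neighbours_le_dbar[OF assms(2)] by auto
    ultimately show ?thesis using iR unfolding g_def d_def by (simp add: frac_le)
  qed
  have "A \<inter> {\<omega> \<in> space M. N i' - blocklist \<eta> trig H t i' \<omega> \<noteq> {} \<and> H t i' \<omega> = i}
      = A \<inter> {\<omega> \<in> space M. H t i' \<omega> = i}"
    using unblocked assms(3) by auto
  then have hit: "measure M (A \<inter> {\<omega> \<in> space M. H t i' \<omega> = i}) = (\<integral>\<omega>. indicator A \<omega> * g \<omega> \<partial>M)"
    using H_uniform[OF assms(1,2,4), of i] unfolding g_def by simp
  have g_meas: "g \<in> borel_measurable M"
    unfolding g_def using uniform_weight_measurable assms(2) by simp
  have "integrable M (\<lambda>\<omega>. indicator A \<omega> * g \<omega>)"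
    using g_bounds g_meas AM
    by (intro P.integrable_const_bound[where B=1]) (auto simp: indicator_def)
  moreover have "integrable M (\<lambda>\<omega>. indicator A \<omega> * (1 / d))"
    using AM by (intro integrable_mult_left integrable_real_indicator) (simp_all add: P.emeasure_eq_measure)
  ultimately have "(\<integral>\<omega>. indicator A \<omega> * (1 / d) \<partial>M) \<le> (\<integral>\<omega>. indicator A \<omega> * g \<omega> \<partial>M)"
    using g_ge by (intro integral_mono) (auto simp: indicator_def)
  then show ?thesis using hit AM unfolding d_def by simp
qed

definition no_contact :: "nat \<Rightarrow> nat \<Rightarrow> nat \<Rightarrow> nat \<Rightarrow> 'a set" where
  "no_contact i i' a t = {\<omega> \<in> space M. \<forall>s\<in>{a..t}. H s i' \<omega> \<noteq> i}"

lemma no_contact_sets_F: "no_contact i i' a t \<in> sets (F (Suc t))"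
proof -
  have "{\<omega> \<in> space (F (Suc t)). \<forall>s\<in>{a..t}. H s i' \<omega> \<noteq> i} \<in> sets (F (Suc t))"
  proof (rule sets.sets_Collect_finite_All)
    fix s assume "s \<in> {a..t}"
    then have "space (F (Suc t)) - {\<omega> \<in> space M. H s i' \<omega> = i} \<in> sets (F (Suc t))"
      using H_event_sets_F by auto
    moreover have "space (F (Suc t)) - {\<omega> \<in> space M. H s i' \<omega> = i}
        = {\<omega> \<in> space (F (Suc t)). H s i' \<omega> \<noteq> i}"
      using space_F by auto
    ultimately show "{\<omega> \<in> space (F (Suc t)). H s i' \<omega> \<noteq> i} \<in> sets (F (Suc t))" by simp
  qed simp
  then show ?thesis unfolding no_contact_def space_F .
qed

lemma no_contact_sets: "no_contact i i' a t \<in> sets M"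
  using no_contact_sets_F sets_F_subset by blast

text \<open>An entry \<open>i\<close> in the blocklist of \<open>i'\<close> at phase \<open>t\<close> comes from a contact at phase
  \<open>j0 - 1\<close> with \<open>t \<le> \<lceil>j0\<^sup>\<eta>\<rceil>\<close>; for \<open>t > \<lceil>a\<^sup>\<eta>\<rceil>\<close> this forces \<open>j0 > a\<close>.\<close>

lemma no_contact_unblocked:
  assumes "real_of_int \<lceil>real a powr \<eta>\<rceil> \<le> real c" "c < t" "\<omega> \<in> no_contact i i' a (t - 1)"
  shows "i \<notin> blocklist \<eta> trig H t i' \<omega>"
proof
  assume "i \<in> blocklist \<eta> trig H t i' \<omega>"
  then obtain j0 where j0: "2 \<le> j0" "j0 \<le> t" "real t \<le> real_of_int \<lceil>real j0 powr \<eta>\<rceil>"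
    "H (j0 - 1) i' \<omega> = i"
    unfolding mem_blocklist_iff by auto
  show False
  proof (cases "j0 \<le> a")
    case True
    then have "\<lceil>real j0 powr \<eta>\<rceil> \<le> \<lceil>real a powr \<eta>\<rceil>"
      using eta_gt_1 by (intro ceiling_mono powr_mono2) auto
    then show False using j0(3) assms(1,2) by linarith
  next
    case False
    then have "j0 - 1 \<in> {a..t - 1}" using j0 by auto
    then show False using j0(4) assms(3) unfolding no_contact_def by auto
  qed
qed

lemma no_contact_step:
  assumes "(i, i') \<in> Ehon n N" "a \<ge> 1"
    and "real_of_int \<lceil>real a powr \<eta>\<rceil> \<le> real c" "c < t"
  shows "measure M (no_contact i i' a t)
    \<le> (1 - 1 / real (dbar n N)) * measure M (no_contact i i' a (t - 1))"
proof -
  define A where "A = no_contact i i' a (t - 1)"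
  have AF: "A \<in> sets (F t)" using no_contact_sets_F[of i i' a "t - 1"] assms(4) by (simp add: A_def)
  have "real a \<le> real a powr \<eta>" using powr_mono[of 1 \<eta> "real a"] assms(2) eta_gt_1 by simp
  then have "a < t" using assms(3,4) by linarith
  then have "{a..t} = insert t {a..t - 1}" by auto
  then have split: "no_contact i i' a t = A - {\<omega> \<in> space M. H t i' \<omega> = i}"
    unfolding A_def no_contact_def by auto
  have "measure M A / real (dbar n N) \<le> measure M (A \<inter> {\<omega> \<in> space M. H t i' \<omega> = i})"
    using assms no_contact_unblocked[OF assms(3,4)] Ehon_memD[OF assms(1)] AF
    by (intro contact_prob_ge) (auto simp: A_def)
  moreover have "measure M (no_contact i i' a t)
      = measure M A - measure M (A \<inter> {\<omega> \<in> space M. H t i' \<omega> = i})"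
    unfolding split using AF sets_F_subset H_event_sets by (intro P.finite_measure_Diff') auto
  ultimately show ?thesis unfolding A_def by (simp add: field_simps)
qed

lemma no_contact_geometric:
  assumes "(i, i') \<in> Ehon n N" "a \<ge> 1" "real_of_int \<lceil>real a powr \<eta>\<rceil> \<le> real c"
  shows "measure M (no_contact i i' a (c + k)) \<le> (1 - 1 / real (dbar n N)) ^ k"
proof (induction k)
  case 0
  show ?case by (simp add: P.prob_le_1)
next
  case (Suc k)
  have "0 \<le> 1 - 1 / real (dbar n N)" using dbar_ge_1[OF assms(1)] by simp
  then have "(1 - 1 / real (dbar n N)) * measure M (no_contact i i' a (c + Suc k - 1))
      \<le> (1 - 1 / real (dbar n N)) ^ Suc k"
    using Suc by (simp add: mult_left_mono)
  then show ?case using no_contact_step[OF assms, of "c + Suc k"] by simp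
qed

lemma Xi_eq_no_contact:
  "{\<omega> \<in> space M. Xi \<rho>1 H j i i' \<omega>} = no_contact i i' (nat \<lfloor>theta \<rho>1 j\<rfloor>) (j - 2)"
  unfolding Xi_def no_contact_def by simp

lemma Xi_prob_le:
  assumes "(i, i') \<in> Ehon n N" and "1 \<le> \<lfloor>theta \<rho>1 j\<rfloor>"
    and window: "real j / 3 \<le> real_of_int ((int j - 2) - \<lceil>(real_of_int \<lfloor>theta \<rho>1 j\<rfloor>) powr \<eta>\<rceil>)"
  shows "measure M {\<omega> \<in> space M. Xi \<rho>1 H j i i' \<omega>} \<le> exp (- real j / (3 * real (dbar n N)))"
proof -
  define d where "d = real (dbar n N)"
  have d1: "d \<ge> 1" using dbar_ge_1[OF assms(1)] unfolding d_def by simp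
  define a where "a = nat \<lfloor>theta \<rho>1 j\<rfloor>"
  have ra: "real a = real_of_int \<lfloor>theta \<rho>1 j\<rfloor>" using assms(2) unfolding a_def by simp
  have a1: "a \<ge> 1" using nat_mono[OF assms(2)] unfolding a_def by simp
  define c where "c = nat \<lceil>real a powr \<eta>\<rceil>"
  have rc: "real c = real_of_int \<lceil>real a powr \<eta>\<rceil>"
    unfolding c_def by (simp add: order.trans[OF _ ceiling_mono[OF powr_ge_zero]])
  have "real j / 3 \<le> real j - 2 - real c" using window unfolding rc ra by simp
  moreover define L where "L = j - 2 - c"
  ultimately have cL: "c + L = j - 2" and L: "real j / 3 \<le> real L"
    by (auto simp: of_nat_diff)
  have "measure M {\<omega> \<in> space M. Xi \<rho>1 H j i i' \<omega>} \<le> (1 - 1 / d) ^ L"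
    unfolding Xi_eq_no_contact a_def[symmetric] cL[symmetric] d_def
    using assms(1) a1 rc by (intro no_contact_geometric) auto
  also have "\<dots> \<le> exp (- 1 / d) ^ L"
    using exp_ge_add_one_self[of "- 1 / d"] d1 by (intro power_mono) auto
  also have "\<dots> = exp (- (real L / d))" by (simp add: exp_of_nat_mult[symmetric])
  also have "\<dots> \<le> exp (- real j / (3 * d))"
  proof -
    have "real j / 3 / d \<le> real L / d" using L d1 by (intro divide_right_mono) auto
    then show ?thesis by simp
  qed
  finally show ?thesis unfolding d_def .
qed

definition some_Xi :: "real \<Rightarrow> nat \<Rightarrow> 'a set" where
  "some_Xi \<rho>1 j = (\<Union>(i, i')\<in>Ehon n N. {\<omega> \<in> space M. Xi \<rho>1 H j i i' \<omega>})"

lemma some_Xi_sets: "some_Xi \<rho>1 j \<in> sets M"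
  unfolding some_Xi_def Xi_eq_no_contact using finite_Ehon no_contact_sets
  by (intro sets.finite_UN) auto

lemma some_Xi_prob_le:
  assumes "0 < \<rho>1" "\<rho>1 \<le> 1 / \<eta>" "J2star \<rho>1 \<eta> \<le> j"
  shows "measure M (some_Xi \<rho>1 j) \<le> real (card (Ehon n N)) * exp (- real j / (3 * real (dbar n N)))"
proof -
  have "measure M (some_Xi \<rho>1 j)
      \<le> (\<Sum>(i, i')\<in>Ehon n N. measure M {\<omega> \<in> space M. Xi \<rho>1 H j i i' \<omega>})"
    unfolding some_Xi_def Xi_eq_no_contact case_prod_beta using finite_Ehon no_contact_sets
    by (intro P.finite_measure_subadditive_finite) auto
  also have "\<dots> \<le> real (card (Ehon n N)) * exp (- real j / (3 * real (dbar n N)))"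
    using J2star_conditions[OF eta_gt_1 assms] Xi_prob_le
    by (intro sum_bounded_above) auto
  finally show ?thesis .
qed

lemma tau_com_gt_subset:
  assumes "1 \<le> j"
  shows "{\<omega> \<in> space M. tau_com n N \<rho>1 H \<omega> > enat j} \<subseteq> (\<Union>k. some_Xi \<rho>1 (j + k))"
proof
  fix \<omega> assume \<omega>: "\<omega> \<in> {\<omega> \<in> space M. tau_com n N \<rho>1 H \<omega> > enat j}"
  show "\<omega> \<in> (\<Union>k. some_Xi \<rho>1 (j + k))"
  proof (rule ccontr)
    assume "\<omega> \<notin> (\<Union>k. some_Xi \<rho>1 (j + k))"
    then have "\<forall>j'\<ge>j. \<forall>(i, i') \<in> Ehon n N. \<not> Xi \<rho>1 H j' i i' \<omega>"
    proof (intro allI impI)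
      fix j' assume "j \<le> j'" "\<omega> \<notin> (\<Union>k. some_Xi \<rho>1 (j + k))"
      then have "\<omega> \<notin> some_Xi \<rho>1 j'" by (metis UNIV_I UN_I le_add_diff_inverse)
      then show "\<forall>(i, i') \<in> Ehon n N. \<not> Xi \<rho>1 H j' i i' \<omega>" using \<omega> unfolding some_Xi_def by auto
    qed
    then have "tau_com n N \<rho>1 H \<omega> \<le> enat j"
      unfolding tau_com_def using assms by (intro INF_lower2[of j]) auto
    then show False using \<omega> by (simp add: not_le[symmetric])
  qed
qed

lemma tau_com_tail_bound:
  assumes "0 < \<rho>1" "\<rho>1 \<le> 1 / \<eta>" "J2star \<rho>1 \<eta> \<le> j"
  shows "measure M {\<omega> \<in> space M. tau_com n N \<rho>1 H \<omega> > enat j}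
           \<le> 3 * (real n + real m) ^ 3 * exp (- real j / (3 * real (dbar n N)))"
proof (cases "dbar n N = 0")
  case True
  have "1 \<le> (real n + real m) ^ 3" using n_ge_1 by (intro one_le_power) simp
  then have "1 \<le> 3 * (real n + real m) ^ 3 * exp (- real j / (3 * real (dbar n N)))"
    using True by simp
  then show ?thesis using P.prob_le_1 order_trans by blast
next
  case False
  define d where "d = real (dbar n N)"
  define C where "C = real (card (Ehon n N))"
  define e where "e = exp (- real j / (3 * d))"
  define q where "q = exp (- 1 / (3 * d))"
  have d1: "d \<ge> 1" using False unfolding d_def by simp
  have q: "0 \<le> q" "q < 1" unfolding q_def using d1 by auto
  have prob_le: "measure M (some_Xi \<rho>1 (j + k)) \<le> C * e * q ^ k" for k
  proof -
    have "- real (j + k) / (3 * d) = - real j / (3 * d) + real k * (- 1 / (3 * d))"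
      using d1 by (simp add: field_simps add_divide_distrib[symmetric])
    then have "exp (- real (j + k) / (3 * d)) = e * q ^ k"
      unfolding e_def q_def by (simp only: exp_add exp_of_nat_mult)
    then show ?thesis
      using some_Xi_prob_le[OF assms(1,2), of "j + k"] assms(3) unfolding C_def d_def
      by (simp add: mult.assoc)
  qed
  have geom: "summable (\<lambda>k. C * e * q ^ k)" using q by (intro summable_mult summable_geometric) simp
  have summable: "summable (\<lambda>k. measure M (some_Xi \<rho>1 (j + k)))"
    by (rule summable_comparison_test'[OF geom, of 0]) (use prob_le in simp)
  have "measure M {\<omega> \<in> space M. tau_com n N \<rho>1 H \<omega> > enat j} \<le> C * e / (1 - q)"
  proof (cases "{\<omega> \<in> space M. tau_com n N \<rho>1 H \<omega> > enat j} \<in> sets M")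
    case True
    have "measure M {\<omega> \<in> space M. tau_com n N \<rho>1 H \<omega> > enat j} \<le> measure M (\<Union>k. some_Xi \<rho>1 (j + k))"
      using True tau_com_gt_subset J2star_conditions(1)[OF eta_gt_1 assms] some_Xi_sets
      by (intro P.finite_measure_mono) auto
    also have "\<dots> \<le> (\<Sum>k. measure M (some_Xi \<rho>1 (j + k)))"
      using some_Xi_sets summable by (intro P.finite_measure_subadditive_countably) auto
    also have "\<dots> \<le> (\<Sum>k. C * e * q ^ k)" using prob_le summable geom by (intro suminf_le) auto
    also have "\<dots> = C * e / (1 - q)" using q by (simp add: suminf_mult suminf_geometric)
    finally show ?thesis .
  next
    case False
    then have "measure M {\<omega> \<in> space M. tau_com n N \<rho>1 H \<omega> > enat j} = 0"
      by (rule measure_notin_sets)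
    moreover have "0 \<le> C * e / (1 - q)" using q unfolding C_def e_def by simp
    ultimately show ?thesis by simp
  qed
  also have "\<dots> = C / (1 - q) * e" by simp
  also have "\<dots> \<le> 3 * (real n + real m) ^ 3 * e"
  proof (rule mult_right_mono)
    have "real (card (Ehon n N)) \<le> real ((n + m)\<^sup>2)" using card_Ehon_le by (simp only: of_nat_le_iff)
    then show "C / (1 - q) \<le> 3 * (real n + real m) ^ 3"
      using d1 dbar_le n_ge_1 unfolding C_def d_def q_def
      by (intro geometric_union_factor_le) (auto simp: of_nat_diff)
  qed (simp add: e_def)
  finally show ?thesis unfolding e_def d_def .
qed

end

theorem mainTheorem8:
  fixes M :: "'a measure" and F :: "nat \<Rightarrow> 'a measure"
    and n m :: nat and N :: "nat \<Rightarrow> nat set"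
    and H :: "nat \<Rightarrow> nat \<Rightarrow> 'a \<Rightarrow> nat" and trig :: "nat \<Rightarrow> nat \<Rightarrow> 'a \<Rightarrow> bool"
    and \<alpha> \<beta> \<eta> \<rho>1 \<rho>2 :: real and j :: nat
  assumes "prob_space M"
    and "n \<ge> 1"
    and "valid_graph n m N"
    and "hon_connected n N"
    and "\<eta> > 1" and "0 < \<rho>1" and "\<rho>1 \<le> 1 / \<eta>" and "\<beta> > 1"
    and "\<alpha> > 3/2 + 1 / (2 * \<beta>) + 1 / (2 * \<rho>1\<^sup>2)"
    and "1 / (2 * \<alpha> - 3) < \<rho>2" and "\<rho>2 < \<rho>1 * (\<beta> - 1)"
    \<comment> \<open>filtration: F j is the information available at phase j before the samples H_j are drawn\<close>
    and "\<And>j. subalgebra M (F j)"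
    and "\<And>j. sets (F j) \<subseteq> sets (F (Suc j))"
    and "\<And>j i. H j i \<in> measurable (F (Suc j)) (count_space UNIV)"
    and "\<And>j i. {\<omega> \<in> space M. trig j i \<omega>} \<in> sets (F j)"
    \<comment> \<open>given the past, H_j^(i) is uniform on N(i) minus the blocklist\<close>
    and "\<And>j i k A. j \<ge> 1 \<Longrightarrow> i \<in> {1..n} \<Longrightarrow> A \<in> sets (F j) \<Longrightarrow>
           measure M (A \<inter> {\<omega> \<in> space M. N i - blocklist \<eta> trig H j i \<omega> \<noteq> {} \<and> H j i \<omega> = k})
           = (\<integral>\<omega>. indicator A \<omega> *
                 (if k \<in> N i - blocklist \<eta> trig H j i \<omega>
                  then 1 / real (card (N i - blocklist \<eta> trig H j i \<omega>)) else 0) \<partial>M)"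
    and "j \<ge> J2star \<rho>1 \<eta>"
  shows "measure M {\<omega> \<in> space M. tau_com n N \<rho>1 H \<omega> > enat j}
           \<le> 3 * (real n + real m) ^ 3 * exp (- real j / (3 * real (dbar n N)))"
proof -
  interpret blocking_gossip M F n m N H trig \<eta>
    by (rule blocking_gossip.intro) (fact assms)+
  show ?thesis using assms(6,7,17) by (rule tau_com_tail_bound)
qed

end
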